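(* Let $a_1,\ldots,a_k$ be positive integers, $A=\sum_{j=1}^k a_j$, $n=k+3$, and $v=[4A+2;\,8a_1,\ldots,8a_k,\,1,\,1,\,1]$ (players $1,\ldots,n$). Let $v_{\&\{n-1,n\}}$ be the game in which players $n-1$ and $n$ merge into one player $\&\{n-1,n\}$ of weight $2$. Then $\beta_{\&\{n-1,n\}}(v_{\&\{n-1,n\}})>\beta_{n-1}(v)+\beta_n(v)$ if and only if there is a set $P\subseteq\{1,\ldots,k\}$ with $\sum_{j\in P}a_j=\sum_{j\notin P}a_j$.
   Context: A weighted voting game $[q;w_1,\ldots,w_n]$ has players $1,\ldots,n$ with nonnegative weights $w_j$ and quota $q$, $0<q\le\sum_jw_j$; a coalition $S$ is winning iff $\sum_{j\in S}w_j\ge q$. Player $j$ is critical in $S$ if $S$ is winning and $S\setminus\{j\}$ is losing; $\eta_j$ is the number of coalitions in which $j$ is critical, and the Banzhaf index is $\beta_j=\eta_j/\sum_k\eta_k$. Merging a set $T$ of players yields the WVG with the same quota in which the players of $T$ are replaced by a single player $\&T$ of weight $\sum_{j\in T}w_j$. *)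

theory Defs
  imports Main "HOL.Real"
begin

definition winning :: "('p \<Rightarrow> real) \<Rightarrow> real \<Rightarrow> 'p set \<Rightarrow> bool" where
  "winning w q S \<longleftrightarrow> q \<le> (\<Sum>j\<in>S. w j)"

definition critical :: "('p \<Rightarrow> real) \<Rightarrow> real \<Rightarrow> 'p \<Rightarrow> 'p set \<Rightarrow> bool" where
  "critical w q j S \<longleftrightarrow> j \<in> S \<and> winning w q S \<and> \<not> winning w q (S - {j})"

definition eta :: "'p set \<Rightarrow> ('p \<Rightarrow> real) \<Rightarrow> real \<Rightarrow> 'p \<Rightarrow> nat" where
  "eta N w q j = card {S. S \<subseteq> N \<and> critical w q j S}"

definition banzhaf :: "'p set \<Rightarrow> ('p \<Rightarrow> real) \<Rightarrow> real \<Rightarrow> 'p \<Rightarrow> real" where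
  "banzhaf N w q j = real (eta N w q j) / (\<Sum>k\<in>N. real (eta N w q k))"

text \<open>Merging the players of T into a single new player labelled t
  (t must not be a remaining player, i.e. t \<notin> N - T); the quota is unchanged.\<close>
definition merge_players :: "'p set \<Rightarrow> 'p set \<Rightarrow> 'p \<Rightarrow> 'p set" where
  "merge_players N T t = insert t (N - T)"

definition merge_weights :: "('p \<Rightarrow> real) \<Rightarrow> 'p set \<Rightarrow> 'p \<Rightarrow> ('p \<Rightarrow> real)" where
  "merge_weights w T t = (\<lambda>j. if j = t then (\<Sum>i\<in>T. w i) else w j)"

end

theory Submission
  imports Defs
begin

(* The game v has big players K = {1..k} of weight 8 a_j and three unit players
   x, y, z; merging y and z gives the game v' with the unit player x and a player
   u of weight 2.  Every coalition splits into a part S of K and a part M of the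
   small players, so each critical count eta_j is a sum, over M, of "window"
   counts of sets S with  q <= w(M) + w(S) < q + w_j.
   For a big player j the weight of M only matters modulo parity (quota and big
   weights are even), which gives eta_j(v) = 2 eta_j(v').  For the small players
   the quota 4A + 2 forces 8 a(S) = 4A, so each of their counts is a multiple of
   the number p of subsets S of K with 2 a(S) = A: eta_y(v) = eta_z(v) = 2p,
   eta_u(v') = 2p and eta_x(v') = 0.  With B the total count of the big players
   in v', this yields beta_u(v') = 2p/(B+2p) and beta_y(v) + beta_z(v) = 4p/(2B+6p),
   and the former exceeds the latter iff p > 0, i.e. iff an equal split exists. *)

lemma card_subsets_split:
  assumes "finite K" "finite Z" "K \<inter> Z = {}"
  shows "card {S. S \<subseteq> K \<union> Z \<and> P S} = (\<Sum>M\<in>Pow Z. card {S. S \<subseteq> K \<and> P (M \<union> S)})"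
proof -
  let ?X = "{S. S \<subseteq> K \<union> Z \<and> P S}"
  have fin: "finite ?X" using assms by simp
  have traces: "(\<lambda>S. S \<inter> Z) ` ?X \<subseteq> Pow Z" by auto
  have "card ?X = (\<Sum>M\<in>Pow Z. card {S \<in> ?X. S \<inter> Z = M})"
    using sum.group[OF fin _ traces, where h="\<lambda>_. 1::nat"] assms(2) by simp
  also have "\<dots> = (\<Sum>M\<in>Pow Z. card {S. S \<subseteq> K \<and> P (M \<union> S)})"
  proof (rule sum.cong)
    fix M assume M: "M \<in> Pow Z"
    have "{S \<in> ?X. S \<inter> Z = M} = (\<lambda>S. M \<union> S) ` {S. S \<subseteq> K \<and> P (M \<union> S)}"
    proof (intro equalityI subsetI)
      fix S assume "S \<in> {S \<in> ?X. S \<inter> Z = M}"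
      then have "S = M \<union> (S \<inter> K)" "P S" by auto
      then show "S \<in> (\<lambda>S. M \<union> S) ` {S. S \<subseteq> K \<and> P (M \<union> S)}"
        by (metis (mono_tags, lifting) image_eqI inf_le2 mem_Collect_eq)
    qed (use M assms(3) in auto)
    moreover have "inj_on (\<lambda>S. M \<union> S) {S. S \<subseteq> K \<and> P (M \<union> S)}"
      by (rule inj_on_inverseI[where g="\<lambda>S. S \<inter> K"]) (use M assms(3) in auto)
    ultimately show "card {S \<in> ?X. S \<inter> Z = M} = card {S. S \<subseteq> K \<and> P (M \<union> S)}"
      by (simp add: card_image)
  qed simp
  finally show ?thesis .
qed

lemma critical_nat_weights:
  assumes "finite S" "\<forall>i\<in>S. w i = real (b i)"
  shows "critical w (real Q) j S \<longleftrightarrow> j \<in> S \<and> Q \<le> sum b S \<and> sum b S < Q + b j"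
proof -
  have total: "sum w S = real (sum b S)" using assms(2) by simp
  have "critical w (real Q) j S \<longleftrightarrow>
          j \<in> S \<and> real Q \<le> real (sum b S) \<and> real (sum b S) < real Q + real (b j)"
    unfolding critical_def winning_def using assms total by (auto simp: sum_diff1)
  then show ?thesis by (simp only: of_nat_add[symmetric] of_nat_le_iff of_nat_less_iff)
qed

definition window :: "'p set \<Rightarrow> ('p \<Rightarrow> nat) \<Rightarrow> ('p set \<Rightarrow> bool) \<Rightarrow> nat \<Rightarrow> nat \<Rightarrow> nat \<Rightarrow> nat" where
  "window K b P Q c d = card {S. S \<subseteq> K \<and> P S \<and> Q \<le> c + sum b S \<and> c + sum b S < Q + d}"

lemma eta_split:
  assumes "finite K" "finite Z" "K \<inter> Z = {}" "\<forall>i\<in>K \<union> Z. w i = real (b i)"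
  shows "eta (K \<union> Z) w (real Q) j
           = (\<Sum>M\<in>Pow Z. window K b (\<lambda>S. j \<in> M \<union> S) Q (sum b M) (b j))"
  unfolding eta_def card_subsets_split[OF assms(1-3)]
proof (rule sum.cong)
  fix M assume M: "M \<in> Pow Z"
  have "critical w (real Q) j (M \<union> S) \<longleftrightarrow>
          j \<in> M \<union> S \<and> Q \<le> sum b M + sum b S \<and> sum b M + sum b S < Q + b j"
    if "S \<subseteq> K" for S
  proof -
    have "finite M" "finite S" "M \<inter> S = {}"
      using M that assms(1-3) finite_subset by auto
    then have "sum b (M \<union> S) = sum b M + sum b S" by (simp add: sum.union_disjoint)
    moreover have "\<forall>i\<in>M \<union> S. w i = real (b i)" using M that assms(4) by auto
    ultimately show ?thesis
      using critical_nat_weights \<open>finite M\<close> \<open>finite S\<close> by (metis finite_UnI)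
  qed
  then show "card {S. S \<subseteq> K \<and> critical w (real Q) j (M \<union> S)}
             = window K b (\<lambda>S. j \<in> M \<union> S) Q (sum b M) (b j)"
    unfolding window_def by (intro arg_cong[where f=card]) auto
qed simp

lemma sum_Pow_insert:
  assumes "finite Z" "x \<notin> Z"
  shows "(\<Sum>M\<in>Pow (insert x Z). f M) = (\<Sum>M\<in>Pow Z. f M) + (\<Sum>M\<in>Pow Z. f (insert x M))"
proof -
  have "(\<Sum>M\<in>Pow (insert x Z). f M) = (\<Sum>M\<in>Pow Z. f M) + (\<Sum>M\<in>insert x ` Pow Z. f M)"
    unfolding Pow_insert by (rule sum.union_disjoint) (use assms in auto)
  also have "(\<Sum>M\<in>insert x ` Pow Z. f M) = (\<Sum>M\<in>Pow Z. f (insert x M))"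
    by (rule sum.reindex_cong[where l="insert x"]) (use assms in \<open>auto simp: inj_on_def\<close>)
  finally show ?thesis .
qed

(* If the quota, the window length, the offset and all weights are even, raising the
   offset by one does not change the count: this is why unit players are
   interchangeable in pairs for a big player. *)
lemma window_parity_shift:
  assumes "even Q" "even d" "even c" "\<forall>i\<in>K. even (b i)"
  shows "window K b P Q (c + 1) d = window K b P Q c d"
  unfolding window_def
proof (intro arg_cong[where f=card] Collect_cong)
  fix S
  show "(S \<subseteq> K \<and> P S \<and> Q \<le> c + 1 + sum b S \<and> c + 1 + sum b S < Q + d) \<longleftrightarrow>
        (S \<subseteq> K \<and> P S \<and> Q \<le> c + sum b S \<and> c + sum b S < Q + d)"
  proof (cases "S \<subseteq> K")
    case True
    have "(Q \<le> c + 1 + X \<longleftrightarrow> Q \<le> c + X) \<and> (c + 1 + X < Q + d \<longleftrightarrow> c + X < Q + d)"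
      if "even X" for X using that assms(1-3) by presburger
    moreover have "even (sum b S)" using True assms(4) by (auto intro: dvd_sum)
    ultimately show ?thesis by simp
  qed simp
qed

definition equal_splits :: "'p set \<Rightarrow> ('p \<Rightarrow> nat) \<Rightarrow> nat" where
  "equal_splits K a = card {S. S \<subseteq> K \<and> 2 * sum a S = sum a K}"

lemma window_half_total:
  assumes "\<forall>i\<in>K. b i = 8 * a i" "d \<le> c" "c \<le> 3"
  shows "window K b (\<lambda>_. True) (4 * sum a K + 2) c d
           = (if 2 \<le> c \<and> c < 2 + d then equal_splits K a else 0)"
proof -
  have "window K b (\<lambda>_. True) (4 * sum a K + 2) c d
      = card {S. S \<subseteq> K \<and> 2 \<le> c \<and> c < 2 + d \<and> 2 * sum a S = sum a K}"
    unfolding window_def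
  proof (intro arg_cong[where f=card] Collect_cong)
    fix S
    have "S \<subseteq> K \<Longrightarrow> sum b S = 8 * sum a S"
      using assms(1) by (simp add: sum_distrib_left subset_iff)
    then show "(S \<subseteq> K \<and> True \<and> 4 * sum a K + 2 \<le> c + sum b S \<and> c + sum b S < 4 * sum a K + 2 + d) \<longleftrightarrow>
               (S \<subseteq> K \<and> 2 \<le> c \<and> c < 2 + d \<and> 2 * sum a S = sum a K)"
      using assms(2,3) by auto presburger+
  qed
  also have "\<dots> = (if 2 \<le> c \<and> c < 2 + d then equal_splits K a else 0)"
    unfolding equal_splits_def by auto
  finally show ?thesis .
qed

lemma eta_split_big:
  assumes "finite K" "finite Z" "K \<inter> Z = {}" "\<forall>i\<in>K \<union> Z. w i = real (b i)" "j \<in> K"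
  shows "eta (K \<union> Z) w (real Q) j
           = (\<Sum>M\<in>Pow Z. window K b (\<lambda>S. j \<in> S) Q (sum b M) (b j))"
  unfolding eta_split[OF assms(1-4)]
proof (rule sum.cong)
  fix M assume "M \<in> Pow Z"
  then have "j \<notin> M" using assms(3,5) by auto
  then show "window K b (\<lambda>S. j \<in> M \<union> S) Q (sum b M) (b j)
             = window K b (\<lambda>S. j \<in> S) Q (sum b M) (b j)"
    unfolding window_def by simp
qed simp

lemma eta_split_small:
  assumes "finite K" "finite Z" "K \<inter> Z = {}" "\<forall>i\<in>K \<union> Z. w i = real (b i)" "j \<in> Z"
  shows "eta (K \<union> Z) w (real Q) j
           = (\<Sum>M\<in>Pow Z. if j \<in> M then window K b (\<lambda>_. True) Q (sum b M) (b j) else 0)"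
  unfolding eta_split[OF assms(1-4)]
proof (rule sum.cong)
  fix M
  have "j \<notin> K" using assms(3,5) by auto
  then have "window K b (\<lambda>S. j \<in> M \<union> S) Q (sum b M) (b j)
             = window K b (\<lambda>_. j \<in> M) Q (sum b M) (b j)"
    unfolding window_def by (intro arg_cong[where f=card]) auto
  then show "window K b (\<lambda>S. j \<in> M \<union> S) Q (sum b M) (b j)
             = (if j \<in> M then window K b (\<lambda>_. True) Q (sum b M) (b j) else 0)"
    unfolding window_def by simp
qed simp

lemma equal_splits_pos_iff:
  assumes "finite K"
  shows "equal_splits K a > 0 \<longleftrightarrow> (\<exists>P \<subseteq> K. sum a P = sum a (K - P))"
proof -
  have halves: "2 * sum a P = sum a K \<longleftrightarrow> sum a P = sum a (K - P)" if "P \<subseteq> K" for P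
    using sum.subset_diff[OF that assms, of a] by linarith
  have "finite {S. S \<subseteq> K \<and> 2 * sum a S = sum a K}" using assms by simp
  then show ?thesis unfolding equal_splits_def using halves by (auto simp: card_gt_0_iff)
qed

lemma share_gain_iff:
  fixes B p :: real
  assumes "0 \<le> B" "0 \<le> p"
  shows "2 * p / (B + 2 * p) > 4 * p / (2 * B + 6 * p) \<longleftrightarrow> p > 0"
proof (cases "p = 0")
  case False
  then have "p > 0" using assms(2) by simp
  then show ?thesis using assms(1) by (simp add: field_simps)
qed simp

locale unit_merge_game =
  fixes K :: "'p set" and a :: "'p \<Rightarrow> nat" and x y z u :: 'p
    and b :: "'p \<Rightarrow> nat" and w w' :: "'p \<Rightarrow> real"
  assumes finite_K: "finite K"
    and outside: "x \<notin> K" "y \<notin> K" "z \<notin> K" "u \<notin> K"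
    and labels_distinct: "distinct [x, y, z, u]"
    and big_weights: "\<forall>i\<in>K. b i = 8 * a i"
    and unit_weights: "b x = 1" "b y = 1" "b z = 1" "b u = 2"
    and w_nat: "\<forall>i\<in>K \<union> {x, y, z}. w i = real (b i)"
    and w'_nat: "\<forall>i\<in>K \<union> {x, u}. w' i = real (b i)"
begin

definition Q :: nat where "Q = 4 * sum a K + 2"

definition p :: nat where "p = equal_splits K a"

definition N :: "'p set" where "N = K \<union> {x, y, z}"

definition N' :: "'p set" where "N' = K \<union> {x, u}"

lemma eta_big_player:
  assumes "j \<in> K"
  shows "eta N w (real Q) j = 2 * eta N' w' (real Q) j"
proof -
  define W where "W c = window K b (\<lambda>S. j \<in> S) Q c (b j)" for c
  have shift: "W 1 = W 0" "W 3 = W 2"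
    using window_parity_shift[of Q "b j" 0 K b] window_parity_shift[of Q "b j" 2 K b]
      big_weights assms unfolding W_def Q_def by auto
  have "j \<noteq> x" "j \<noteq> y" "j \<noteq> z" "j \<noteq> u" using assms outside by auto
  then have "eta N w (real Q) j = W 0 + 3 * W 1 + 3 * W 2 + W 3"
    and "eta N' w' (real Q) j = W 0 + W 1 + W 2 + W 3"
    using eta_split_big[of K "{x, y, z}" w b j Q] eta_split_big[of K "{x, u}" w' b j Q]
      finite_K outside w_nat w'_nat assms labels_distinct unit_weights
    unfolding W_def N_def N'_def by (simp_all add: sum_Pow_insert numeral_2_eq_2 numeral_3_eq_3)
  then show ?thesis using shift by simp
qed

lemma unit_windows:
  "window K b (\<lambda>_. True) Q 1 1 = 0" "window K b (\<lambda>_. True) Q 2 1 = p"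
  "window K b (\<lambda>_. True) Q 3 1 = 0" "window K b (\<lambda>_. True) Q 2 2 = p"
  "window K b (\<lambda>_. True) Q 3 2 = p"
  unfolding Q_def p_def using window_half_total[OF big_weights] by simp_all

(* Each unit player of v is critical exactly when paired with one other unit
   player and a set S of half the total weight. *)
lemma eta_unit_original:
  assumes "v \<in> {x, y, z}"
  shows "eta N w (real Q) v = 2 * p"
proof -
  have "eta N w (real Q) v
      = (\<Sum>M\<in>Pow {x, y, z}. if v \<in> M then window K b (\<lambda>_. True) Q (sum b M) (b v) else 0)"
    unfolding N_def by (rule eta_split_small) (use assms finite_K outside w_nat in auto)
  then show ?thesis
    using assms labels_distinct unit_weights unit_windows
    by (auto simp: sum_Pow_insert numeral_2_eq_2 numeral_3_eq_3)
qed

(* In v' the player u is critical with or without x, and x is never critical. *)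
lemma eta_merged_units:
  "eta N' w' (real Q) u = 2 * p"
  "eta N' w' (real Q) x = 0"
  using eta_split_small[of K "{x, u}" w' b u Q] eta_split_small[of K "{x, u}" w' b x Q]
    finite_K outside w'_nat labels_distinct unit_weights unit_windows
  unfolding N'_def by (auto simp: sum_Pow_insert numeral_2_eq_2 numeral_3_eq_3)

lemma merge_gain_iff:
  "banzhaf N' w' (real Q) u
     > banzhaf N w (real Q) y + banzhaf N w (real Q) z
   \<longleftrightarrow> p > 0"
proof -
  define B where "B = (\<Sum>j\<in>K. real (eta N' w' (real Q) j))"
  have disjoint: "K \<inter> {x, y, z} = {}" "K \<inter> {x, u} = {}" using outside by auto
  have "(\<Sum>j\<in>N. real (eta N w (real Q) j))
      = (\<Sum>j\<in>K. real (eta N w (real Q) j))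
        + (\<Sum>j\<in>{x, y, z}. real (eta N w (real Q) j))"
    unfolding N_def by (rule sum.union_disjoint) (use finite_K disjoint in auto)
  also have "\<dots> = 2 * B + 6 * real p"
    using labels_distinct by (simp add: B_def eta_big_player eta_unit_original sum_distrib_left)
  finally have total: "(\<Sum>j\<in>N. real (eta N w (real Q) j))
                       = 2 * B + 6 * real p" .
  have "(\<Sum>j\<in>N'. real (eta N' w' (real Q) j))
      = B + (\<Sum>j\<in>{x, u}. real (eta N' w' (real Q) j))"
    unfolding B_def N'_def by (rule sum.union_disjoint) (use finite_K disjoint in auto)
  also have "\<dots> = B + 2 * real p"
    using labels_distinct by (simp add: eta_merged_units)
  finally have total_merged: "(\<Sum>j\<in>N'. real (eta N' w' (real Q) j))
                              = B + 2 * real p" .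
  have "banzhaf N w (real Q) y + banzhaf N w (real Q) z
      = 4 * real p / (2 * B + 6 * real p)"
    unfolding banzhaf_def total by (simp add: eta_unit_original add_divide_distrib[symmetric])
  moreover have "banzhaf N' w' (real Q) u = 2 * real p / (B + 2 * real p)"
    unfolding banzhaf_def total_merged by (simp add: eta_merged_units)
  moreover have "B \<ge> 0" unfolding B_def by (simp add: sum_nonneg)
  ultimately show ?thesis using share_gain_iff[of B "real p"] by simp
qed

end

theorem mainTheorem7:
  fixes k :: nat and a :: "nat \<Rightarrow> nat"
  assumes kpos: "k \<ge> 1" and apos: "\<forall>j\<in>{1..k}. a j > 0"
  defines "A \<equiv> (\<Sum>j\<in>{1..k}. a j)"
  defines "n \<equiv> k + 3"
  defines "q \<equiv> 4 * real A + 2"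
  defines "w \<equiv> (\<lambda>j::nat. if j \<in> {1..k} then 8 * real (a j) else if j \<in> {k+1..k+3} then 1 else 0)"
  defines "N \<equiv> {1..n}"
  defines "T \<equiv> {n - 1, n}"
  defines "t \<equiv> n + 1"
  shows "banzhaf (merge_players N T t) (merge_weights w T t) q t
           > banzhaf N w q (n - 1) + banzhaf N w q n
         \<longleftrightarrow> (\<exists>P \<subseteq> {1..k}. (\<Sum>j\<in>P. a j) = (\<Sum>j\<in>{1..k} - P. a j))"
proof -
  define b where "b j = (if j \<in> {1..k} then 8 * a j else if j = k + 4 then 2 else 1)" for j
  interpret G: unit_merge_game "{1..k}" a "k + 1" "k + 2" "k + 3" "k + 4" b w "merge_weights w T t"
    by unfold_locales (auto simp: b_def w_def merge_weights_def T_def t_def n_def)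
  have "N = G.N" "merge_players N T t = G.N'"
    unfolding N_def G.N_def merge_players_def G.N'_def T_def t_def n_def by auto
  moreover have "q = real G.Q" "n - 1 = k + 2" "n = k + 3" "t = k + 4"
    unfolding q_def G.Q_def A_def t_def n_def by simp_all
  ultimately show ?thesis
    using G.merge_gain_iff equal_splits_pos_iff[of "{1..k}" a] unfolding G.p_def by simp
qed

end
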